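(* Let $A$ be a parametric timed B\"uchi automaton, $\alpha$ an abstraction over its symbolic semantics $[\![A]\!]$, and $s$ a state of the induced system $[\![A]\!]^\alpha$. Then for every state $s'$ reachable from $s$ in $[\![A]\!]^\alpha$ (via $\Longrightarrow^\alpha$) we have $s'.[\![C]\!]\subseteq s.[\![C]\!]$.
   Context: Parameters and guards. $P$ is a finite set of parameters; an affine expression is $z_0+z_1p_1+\dots+z_np_n$ with $p_i\in P$, $z_i\in\mathbb Z$; $E(P)$ is the set of these. A parameter valuation is $v:P\to\mathbb Z$. Bounds $lb,ub:P\to\mathbb Z$ are fixed. $X$ is a finite set of clocks containing a zero clock $x_0$. A guard is a finite conjunction of $x_i-x_j\sim e$ with $e\in E(P)$, $\sim\in\{\le,<\}$; it is simple if always $x_i=x_0$ or $x_j=x_0$. Clock valuations $\eta:X\to\mathbb R_{\ge0}$ have $\eta(x_0)=0$; $\eta+d$ delays all clocks but $x_0$ by $d$, $\eta\langle R\rangle$ resets the clocks in $R$. A PTA is $M=(L,l_0,X,P,\Delta,Inv)$ with $\Delta\subseteq L\times(\text{simple guards})\times2^X\times L$ and $Inv$ assigning simple guards to locations; its concrete semantics $[\![M]\!]_v$ has states $(l,\eta)$, initial state $(l_0,\mathbf 0)$, delay transitions $(l,\eta)\xrightarrow{d}(l,\eta+d)$ when $(v,\eta+d)\models Inv(l)$ and action transitions $(l,\eta)\xrightarrow{act}(l',\eta\langle R\rangle)$ when $(l,g,R,l')\in\Delta$, $(v,\eta)\models g$, $(v,\eta\langle R\rangle)\models Inv(l')$. A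 PTBA is $A=(M,F)$, $F\subseteq L$. A constraint is $e\sim e'$ ($e,e'\in E(P)$, $\sim\in\{<,\le,\ge,>\}$), a constraint set $C$ a finite set of them, $[\![C]\!]$ the set of valuations satisfying all of them, $C\models c$ iff $[\![C]\!]\subseteq[\![c]\!]$. A PDBM $D$ has for all $0\le i,j\le|X|$ an entry $D_{ij}: x_i-x_j\prec_{ij}e_{ij}$ ($\prec_{ij}\in\{\le,<\}$, $e_{ij}\in E(P)\cup\{\infty\}$, $e_{ii}=0$). A CPDBM is $(C,D)$ with $C\models e_{0i}\ge0$ for all $i$; $[\![C,D]\!]=\{(v,\eta):v\in[\![C]\!],\eta\text{ satisfies all }D_{ij}\text{ under }v\}$. Identify $\le$ with true and $<$ with false. Reset: $(C,D)\langle x_r\rangle=(C,D')$ with $D'_{rj}=D_{0j}$ ($j\neq r$), $D'_{ir}=D_{i0}$ ($i\neq r$), others unchanged (sets of clocks: sequentially). Time successor: $D^\uparrow_{i0}=(\infty,<)$ for $i\ne0$, others unchanged. Guard application of $g:x_i-x_j\prec e$ with $c$ the constraint $e_{ij}(\prec_{ij}\Rightarrow\prec)e$: $(C,D)[g]$ equals $\{(C,D[g])\}$ if $C\models\neg c$, $\{(C,D)\}$ if $C\models c$, and $\{(C\cup\{c\},D),(C\cup\{\neg c\},D[g])\}$ otherwise, where $D[g]$ sets entry $ij$ to $(e,\prec)$; conjunctions are applied sequentially. Canonisation $(C,D)_c$: all results of the nondeterministic Floyd–Warshall procedure that for $k,i,j$ ranging in order over $0..|X|$ replaces the current $(C,D)$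 by an element of $(C,D)[x_i-x_j(\prec_{ik}\wedge\prec_{kj})e_{ik}+e_{kj}]$. Symbolic semantics $[\![A]\!]$: states $(l,[\![C,D]\!])$; for such $s$, $s.[\![C]\!]$ denotes $[\![C]\!]$. Initial states $(l_0,[\![C,D]\!])$ for $(C,D)\in(C_0,E^\uparrow)[Inv(l_0)]$, $E$ with all entries $(0,\le)$, $C_0=\{lb(p)\le p,\ p\le ub(p):p\in P\}$. Transition $(l,[\![C,D]\!])\Longrightarrow(l',[\![C'_c,D'_c]\!])$ iff $(l,g,R,l')\in\Delta$, $(C'',D'')\in(C,D)[g]$, $(C''_c,D''_c)\in(C'',D'')_c$, $(C',D')\in(C''_c,D''_c\langle R\rangle^\uparrow)[Inv(l')]$, $(C'_c,D'_c)\in(C',D')_c$. Abstraction. For concrete $s=(l,\eta)$ and symbolic $S=(l',[\![C,D]\!])$, $s\in_vS$ means $l=l'$, $v\in[\![C]\!]$, $\eta\in$ the clock valuations satisfying $D$ under $v$. $\preccurlyeq$ is the largest time-abstracting simulation on $[\![M]\!]_v$ (a relation $R$ such that $s_1Rs_2$ and an action step $s_1\xrightarrow{act}s_1'$ give $s_2\xrightarrow{act}s_2'$ with $s_1'Rs_2'$, and a delay step of $s_1$ by $d_1$ is matched by a delay step of $s_2$ by some $d_2$ with related results). An abstraction over $[\![A]\!]$ is a map $\alpha$ from symbolic states to sets of symbolic states such that (i) $(l',[\![C',D']\!])\in\alpha((l,[\![C,D]\!]))$ implies $l=l'$, $[\![C']\!]\subseteq[\![C]\!]$, $[\![C',D]\!]\subseteq[\![C',D']\!]$;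 (ii) for each $v\in[\![C]\!]$ there exist $S_1$ and $S_2\in\alpha(S_1)$ such that every $s\in_vS_2$ has some $s'\in_vS_1$ with $s\preccurlyeq s'$. The induced system $[\![A]\!]^\alpha$ has states $\{S:S\in\alpha(S')\}$, initial states the images of initial states, and $Q\Longrightarrow^\alpha Q'$ iff $Q\Longrightarrow S$ and $Q'\in\alpha(S)$ for some symbolic $S$. *)

theory Defs
  imports Main "HOL-Library.Extended_Real"
begin

text \<open>Parameters are the elements of a finite type 'p (so P = UNIV).
  An affine expression z0 + z1 p1 + ... + zn pn is a pair (z0, z) with z the
  coefficient function.\<close>

type_synonym 'p expr = "int \<times> ('p \<Rightarrow> int)"
type_synonym 'p pval = "'p \<Rightarrow> int"

definition eval_expr :: "'p::finite pval \<Rightarrow> 'p expr \<Rightarrow> real" where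
  "eval_expr v e = real_of_int (fst e + (\<Sum>p\<in>UNIV. snd e p * v p))"

definition const_expr :: "int \<Rightarrow> 'p expr" where
  "const_expr c = (c, (\<lambda>_. 0))"

definition var_expr :: "'p \<Rightarrow> 'p expr" where
  "var_expr p = (0, (\<lambda>q. if q = p then 1 else 0))"

definition add_expr :: "'p expr \<Rightarrow> 'p expr \<Rightarrow> 'p expr" where
  "add_expr e1 e2 = (fst e1 + fst e2, (\<lambda>p. snd e1 p + snd e2 p))"

text \<open>Extended expressions: None stands for infinity.\<close>
type_synonym 'p eexpr = "'p expr option"

definition eval_eexpr :: "'p::finite pval \<Rightarrow> 'p eexpr \<Rightarrow> ereal" where
  "eval_eexpr v e = (case e of None \<Rightarrow> PInfty | Some e' \<Rightarrow> ereal (eval_expr v e'))"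

datatype rel = Lt | Le | Ge | Gt

fun neg_rel :: "rel \<Rightarrow> rel" where
  "neg_rel Lt = Ge" | "neg_rel Le = Gt" | "neg_rel Ge = Lt" | "neg_rel Gt = Le"

fun rel_sem :: "rel \<Rightarrow> ereal \<Rightarrow> ereal \<Rightarrow> bool" where
  "rel_sem Lt a b = (a < b)" | "rel_sem Le a b = (a \<le> b)"
| "rel_sem Ge a b = (a \<ge> b)" | "rel_sem Gt a b = (a > b)"

text \<open>A constraint e ~ e'. (Sides are extended expressions only so that the
  constraint c arising in guard application can be written uniformly when an
  entry is infinite; such constraints are always decided and never get added.)\<close>
type_synonym 'p constr = "'p eexpr \<times> rel \<times> 'p eexpr"

definition sat_constr :: "'p::finite pval \<Rightarrow> 'p constr \<Rightarrow> bool" where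
  "sat_constr v c = (case c of (a, r, b) \<Rightarrow> rel_sem r (eval_eexpr v a) (eval_eexpr v b))"

definition neg_constr :: "'p constr \<Rightarrow> 'p constr" where
  "neg_constr c = (case c of (a, r, b) \<Rightarrow> (a, neg_rel r, b))"

definition csem :: "'p::finite constr set \<Rightarrow> 'p pval set" where
  "csem C = {v. \<forall>c\<in>C. sat_constr v c}"

definition entails :: "'p::finite constr set \<Rightarrow> 'p constr \<Rightarrow> bool" where
  "entails C c \<longleftrightarrow> csem C \<subseteq> {v. sat_constr v c}"

text \<open>Clocks are x_0, ..., x_n represented by the naturals 0..n; 0 is the zero clock.
  A clock valuation is a function nat => real (only indices 0..n matter).
  A bound is a pair (e, b) with b = True meaning \<le> and b = False meaning <.\<close>

type_synonym 'p bnd = "'p eexpr \<times> bool"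
type_synonym cval = "nat \<Rightarrow> real"

text \<open>A guard atom (i, j, b, e) is x_i - x_j \<prec> e, \<prec> = \<le> iff b.\<close>
type_synonym 'p atom = "nat \<times> nat \<times> bool \<times> 'p expr"
type_synonym 'p guard = "'p atom list"

definition is_cval :: "cval \<Rightarrow> bool" where
  "is_cval \<eta> \<longleftrightarrow> \<eta> 0 = 0 \<and> (\<forall>i. \<eta> i \<ge> 0)"

definition sat_bnd :: "'p::finite pval \<Rightarrow> cval \<Rightarrow> nat \<Rightarrow> nat \<Rightarrow> 'p bnd \<Rightarrow> bool" where
  "sat_bnd v \<eta> i j b = (if snd b then ereal (\<eta> i - \<eta> j) \<le> eval_eexpr v (fst b)
                              else ereal (\<eta> i - \<eta> j) < eval_eexpr v (fst b))"

definition sat_guard :: "'p::finite pval \<Rightarrow> cval \<Rightarrow> 'p guard \<Rightarrow> bool" where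
  "sat_guard v \<eta> g \<longleftrightarrow> (\<forall>(i, j, b, e) \<in> set g. sat_bnd v \<eta> i j (Some e, b))"

definition simple_guard :: "nat \<Rightarrow> 'p guard \<Rightarrow> bool" where
  "simple_guard n g \<longleftrightarrow> (\<forall>(i, j, b, e) \<in> set g. i \<le> n \<and> j \<le> n \<and> (i = 0 \<or> j = 0))"

definition delay :: "cval \<Rightarrow> real \<Rightarrow> cval" where
  "delay \<eta> d = (\<lambda>i. if i = 0 then \<eta> i else \<eta> i + d)"

definition reset_cval :: "nat list \<Rightarrow> cval \<Rightarrow> cval" where
  "reset_cval R \<eta> = (\<lambda>i. if i \<in> set R then 0 else \<eta> i)"

text \<open>A PTA (L, l0, X, P, Delta, Inv): X = {x_0..x_nclk}; P = UNIV :: 'p set.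
  Reset sets are given as lists (applied sequentially in the symbolic semantics).\<close>
record ('l, 'p) pta =
  locs :: "'l set"
  init :: "'l"
  nclk :: nat
  trans :: "('l \<times> 'p guard \<times> nat list \<times> 'l) set"
  inv :: "'l \<Rightarrow> 'p guard"

definition wf_pta :: "('l, 'p) pta \<Rightarrow> bool" where
  "wf_pta M \<longleftrightarrow> finite (locs M) \<and> init M \<in> locs M
     \<and> (\<forall>(l, g, R, l') \<in> trans M. l \<in> locs M \<and> l' \<in> locs M
           \<and> simple_guard (nclk M) g \<and> (\<forall>r \<in> set R. r \<le> nclk M))
     \<and> (\<forall>l \<in> locs M. simple_guard (nclk M) (inv M l))"

type_synonym ('l, 'p) ptba = "('l, 'p) pta \<times> 'l set"

definition wf_ptba :: "('l, 'p) ptba \<Rightarrow> bool" where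
  "wf_ptba A \<longleftrightarrow> wf_pta (fst A) \<and> snd A \<subseteq> locs (fst A)"

type_synonym 'l cstate = "'l \<times> cval"

definition cstates :: "('l, 'p) pta \<Rightarrow> 'l cstate set" where
  "cstates M = {(l, \<eta>). l \<in> locs M \<and> is_cval \<eta>}"

definition delay_step :: "('l, 'p::finite) pta \<Rightarrow> 'p pval \<Rightarrow> 'l cstate \<Rightarrow> real \<Rightarrow> 'l cstate \<Rightarrow> bool" where
  "delay_step M v s d s' \<longleftrightarrow> d \<ge> 0 \<and> fst s' = fst s \<and> snd s' = delay (snd s) d
      \<and> sat_guard v (delay (snd s) d) (inv M (fst s))"

definition act_step :: "('l, 'p::finite) pta \<Rightarrow> 'p pval \<Rightarrow> 'l cstate \<Rightarrow> 'l cstate \<Rightarrow> bool" where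
  "act_step M v s s' \<longleftrightarrow> (\<exists>g R. (fst s, g, R, fst s') \<in> trans M \<and> sat_guard v (snd s) g
      \<and> snd s' = reset_cval R (snd s) \<and> sat_guard v (snd s') (inv M (fst s')))"

definition ta_sim :: "('l, 'p::finite) pta \<Rightarrow> 'p pval \<Rightarrow> ('l cstate \<times> 'l cstate) set \<Rightarrow> bool" where
  "ta_sim M v R \<longleftrightarrow> R \<subseteq> cstates M \<times> cstates M \<and>
     (\<forall>(s1, s2) \<in> R.
        (\<forall>s1'. act_step M v s1 s1' \<longrightarrow> (\<exists>s2'. act_step M v s2 s2' \<and> (s1', s2') \<in> R))
      \<and> (\<forall>d1 s1'. delay_step M v s1 d1 s1' \<longrightarrow>
            (\<exists>d2 s2'. delay_step M v s2 d2 s2' \<and> (s1', s2') \<in> R)))"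

definition sim_le :: "('l, 'p::finite) pta \<Rightarrow> 'p pval \<Rightarrow> 'l cstate \<Rightarrow> 'l cstate \<Rightarrow> bool" where
  "sim_le M v s1 s2 \<longleftrightarrow> (\<exists>R. ta_sim M v R \<and> (s1, s2) \<in> R)"

type_synonym 'p dbm = "nat \<Rightarrow> nat \<Rightarrow> 'p bnd"

definition zone :: "nat \<Rightarrow> 'p::finite constr set \<Rightarrow> 'p dbm \<Rightarrow> ('p pval \<times> cval) set" where
  "zone n C D = {(v, \<eta>). v \<in> csem C \<and> is_cval \<eta> \<and> (\<forall>i\<le>n. \<forall>j\<le>n. sat_bnd v \<eta> i j (D i j))}"

definition is_pdbm :: "nat \<Rightarrow> 'p dbm \<Rightarrow> bool" where
  "is_pdbm n D \<longleftrightarrow> (\<forall>i\<le>n. D i i = (Some (const_expr 0), True))"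

definition is_cpdbm :: "nat \<Rightarrow> 'p::finite constr set \<Rightarrow> 'p dbm \<Rightarrow> bool" where
  "is_cpdbm n C D \<longleftrightarrow> finite C \<and> is_pdbm n D
     \<and> (\<forall>i\<le>n. entails C (fst (D 0 i), Ge, Some (const_expr 0)))"

definition upd_dbm :: "'p dbm \<Rightarrow> nat \<Rightarrow> nat \<Rightarrow> 'p bnd \<Rightarrow> 'p dbm" where
  "upd_dbm D i j b = D(i := (D i)(j := b))"

definition apply_bnd :: "nat \<Rightarrow> nat \<Rightarrow> 'p bnd \<Rightarrow> 'p::finite constr set \<times> 'p dbm
                          \<Rightarrow> ('p constr set \<times> 'p dbm) set" where
  "apply_bnd i j b CD = (case CD of (C, D) \<Rightarrow>
     (let c = (fst (D i j), (if (snd (D i j) \<longrightarrow> snd b) then Le else Lt), fst b) in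
      if entails C (neg_constr c) then {(C, upd_dbm D i j b)}
      else if entails C c then {(C, D)}
      else {(insert c C, D), (insert (neg_constr c) C, upd_dbm D i j b)}))"

definition bind_set :: "('a \<Rightarrow> 'b set) \<Rightarrow> 'a set \<Rightarrow> 'b set" where
  "bind_set f S = (\<Union>x\<in>S. f x)"

definition apply_guard :: "'p guard \<Rightarrow> 'p::finite constr set \<times> 'p dbm
                            \<Rightarrow> ('p constr set \<times> 'p dbm) set" where
  "apply_guard g CD = foldl (\<lambda>S (i, j, b, e). bind_set (apply_bnd i j (Some e, b)) S) {CD} g"

definition reset1 :: "nat \<Rightarrow> 'p dbm \<Rightarrow> 'p dbm" where
  "reset1 r D = (\<lambda>i j. if i = r \<and> j \<noteq> r then D 0 j
                       else if j = r \<and> i \<noteq> r then D i 0 else D i j)"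

definition reset_dbm :: "nat list \<Rightarrow> 'p dbm \<Rightarrow> 'p dbm" where
  "reset_dbm R D = foldl (\<lambda>D r. reset1 r D) D R"

definition up_dbm :: "'p dbm \<Rightarrow> 'p dbm" where
  "up_dbm D = (\<lambda>i j. if i \<noteq> 0 \<and> j = 0 then (None, False) else D i j)"

definition add_bnd :: "'p bnd \<Rightarrow> 'p bnd \<Rightarrow> 'p bnd" where
  "add_bnd b1 b2 = ((case (fst b1, fst b2) of (Some e1, Some e2) \<Rightarrow> Some (add_expr e1 e2)
                                           | _ \<Rightarrow> None), snd b1 \<and> snd b2)"

definition canon_step :: "nat \<times> nat \<times> nat \<Rightarrow> 'p::finite constr set \<times> 'p dbm
                           \<Rightarrow> ('p constr set \<times> 'p dbm) set" where
  "canon_step kij CD = (case kij of (k, i, j) \<Rightarrow>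
      apply_bnd i j (add_bnd (snd CD i k) (snd CD k j)) CD)"

definition canon :: "nat \<Rightarrow> 'p::finite constr set \<times> 'p dbm \<Rightarrow> ('p constr set \<times> 'p dbm) set" where
  "canon n CD = foldl (\<lambda>S kij. bind_set (canon_step kij) S) {CD}
       [(k, i, j). k \<leftarrow> [0..<Suc n], i \<leftarrow> [0..<Suc n], j \<leftarrow> [0..<Suc n]]"

text \<open>Note: as canonisation may produce matrices that violate e_ii = 0 or e_0i >= 0
  syntactically, symbolic states are taken as (l, [[C]], [[C, D]]) for any finite constraint
  set C and any parametric difference bound matrix D (closed under the transition relation).\<close>

text \<open>A symbolic state (l, [[C, D]]) is represented by the location together with the
  semantic objects [[C]] and [[C, D]] (so that s.[[C]] is its second component).\<close>
type_synonym ('l, 'p) sstate = "'l \<times> 'p pval set \<times> ('p pval \<times> cval) set"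

definition sstates :: "('l, 'p::finite) ptba \<Rightarrow> ('l, 'p) sstate set" where
  "sstates A = {(l, csem C, zone (nclk (fst A)) C D) | l C D.
                  l \<in> locs (fst A) \<and> finite C}"

definition C0 :: "('p \<Rightarrow> int) \<Rightarrow> ('p \<Rightarrow> int) \<Rightarrow> 'p constr set" where
  "C0 lb ub = (\<Union>p. {(Some (const_expr (lb p)), Le, Some (var_expr p)),
                     (Some (var_expr p), Le, Some (const_expr (ub p)))})"

definition E_dbm :: "'p dbm" where
  "E_dbm = (\<lambda>i j. (Some (const_expr 0), True))"

definition sinit :: "('p \<Rightarrow> int) \<Rightarrow> ('p \<Rightarrow> int) \<Rightarrow> ('l, 'p::finite) ptba \<Rightarrow> ('l, 'p) sstate set" where
  "sinit lb ub A = {(init (fst A), csem C, zone (nclk (fst A)) C D) | C D.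
       (C, D) \<in> apply_guard (inv (fst A) (init (fst A))) (C0 lb ub, up_dbm E_dbm)}"

definition sstep :: "('l, 'p::finite) ptba \<Rightarrow> ('l, 'p) sstate \<Rightarrow> ('l, 'p) sstate \<Rightarrow> bool" where
  "sstep A S S' \<longleftrightarrow> (let M = fst A; n = nclk M in
     \<exists>l C D g R l' C2 D2 C2c D2c C1 D1 C1c D1c.
        S = (l, csem C, zone n C D) \<and> finite C
      \<and> (l, g, R, l') \<in> trans M
      \<and> (C2, D2) \<in> apply_guard g (C, D)
      \<and> (C2c, D2c) \<in> canon n (C2, D2)
      \<and> (C1, D1) \<in> apply_guard (inv M l') (C2c, up_dbm (reset_dbm R D2c))
      \<and> (C1c, D1c) \<in> canon n (C1, D1)
      \<and> S' = (l', csem C1c, zone n C1c D1c))"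

definition in_v :: "'p pval \<Rightarrow> 'l cstate \<Rightarrow> ('l, 'p) sstate \<Rightarrow> bool" where
  "in_v v s S \<longleftrightarrow> fst s = fst S \<and> v \<in> fst (snd S) \<and> (v, snd s) \<in> snd (snd S)"

text \<open>Condition (i) uses [[C', D]] = {(v, eta) in [[C, D]]. v in [[C']]} (as [[C']] is a
  subset of [[C]]). Condition (ii) is read universally: for every symbolic S1 = (l, [[C,D]]),
  every S2 in alpha(S1) and every v in [[C]], each s in_v S2 is simulated by some s' in_v S1.\<close>
definition abstraction :: "('l, 'p::finite) ptba \<Rightarrow> (('l, 'p) sstate \<Rightarrow> ('l, 'p) sstate set) \<Rightarrow> bool" where
  "abstraction A \<alpha> \<longleftrightarrow>
     (\<forall>S \<in> sstates A. \<alpha> S \<subseteq> sstates A)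
   \<and> (\<forall>S \<in> sstates A. \<forall>S' \<in> \<alpha> S.
        fst S' = fst S \<and> fst (snd S') \<subseteq> fst (snd S)
      \<and> {p \<in> snd (snd S). fst p \<in> fst (snd S')} \<subseteq> snd (snd S'))
   \<and> (\<forall>S1 \<in> sstates A. \<forall>S2 \<in> \<alpha> S1. \<forall>v \<in> fst (snd S1).
        \<forall>s. in_v v s S2 \<longrightarrow> (\<exists>s'. in_v v s' S1 \<and> sim_le (fst A) v s s'))"

definition astates :: "('l, 'p::finite) ptba \<Rightarrow> (('l, 'p) sstate \<Rightarrow> ('l, 'p) sstate set) \<Rightarrow> ('l, 'p) sstate set" where
  "astates A \<alpha> = {S. \<exists>S' \<in> sstates A. S \<in> \<alpha> S'}"

definition ainit :: "('p \<Rightarrow> int) \<Rightarrow> ('p \<Rightarrow> int) \<Rightarrow> ('l, 'p::finite) ptba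
                      \<Rightarrow> (('l, 'p) sstate \<Rightarrow> ('l, 'p) sstate set) \<Rightarrow> ('l, 'p) sstate set" where
  "ainit lb ub A \<alpha> = (\<Union>S \<in> sinit lb ub A. \<alpha> S)"

definition astep :: "('l, 'p::finite) ptba \<Rightarrow> (('l, 'p) sstate \<Rightarrow> ('l, 'p) sstate set)
                      \<Rightarrow> ('l, 'p) sstate \<Rightarrow> ('l, 'p) sstate \<Rightarrow> bool" where
  "astep A \<alpha> Q Q' \<longleftrightarrow> (\<exists>S. sstep A Q S \<and> Q' \<in> \<alpha> S)"

end

theory Submission
  imports Defs
begin

text \<open>Every operation of the symbolic semantics (guard application, canonisation, reset, time
  successor) either leaves the constraint set unchanged or adds constraints to it. Hence along a
  symbolic step the parameter region \<open>[[C]]\<close> can only shrink, and an abstraction never enlarges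
  it either, by condition (i).\<close>

definition adds_constraints :: "'p constr set \<Rightarrow> 'p constr set \<Rightarrow> bool" where
  "adds_constraints C C' \<longleftrightarrow> (\<exists>F. finite F \<and> C' = C \<union> F)"

lemma adds_constraints_refl: "adds_constraints C C"
  unfolding adds_constraints_def by blast

lemma adds_constraints_trans:
  "adds_constraints C C' \<Longrightarrow> adds_constraints C' C'' \<Longrightarrow> adds_constraints C C''"
  unfolding adds_constraints_def by (metis finite_UnI sup_assoc)

lemma apply_bnd_adds_constraints: "y \<in> apply_bnd i j b x \<Longrightarrow> adds_constraints (fst x) (fst y)"
  unfolding apply_bnd_def adds_constraints_def
  by (cases x) (auto simp: Let_def split: if_splits intro: exI[of _ "{}"] exI[of _ "{_}"])

lemma foldl_bind_set_adds_constraints: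
  assumes "\<And>a x y. y \<in> F a x \<Longrightarrow> adds_constraints (fst x) (fst y)"
    and "y \<in> foldl (\<lambda>S a. bind_set (F a) S) S0 as"
  shows "\<exists>x\<in>S0. adds_constraints (fst x) (fst y)"
  using assms(2)
proof (induction as arbitrary: S0)
  case Nil
  then show ?case using adds_constraints_refl by auto
next
  case (Cons a as)
  then obtain z where z: "z \<in> bind_set (F a) S0" "adds_constraints (fst z) (fst y)"
    by fastforce
  then obtain x where "x \<in> S0" "z \<in> F a x"
    unfolding bind_set_def by blast
  then show ?case
    using z(2) assms(1) adds_constraints_trans by blast
qed

lemma apply_guard_adds_constraints:
  "y \<in> apply_guard g x \<Longrightarrow> adds_constraints (fst x) (fst y)"
  using foldl_bind_set_adds_constraints[of "\<lambda>(i, j, b, e). apply_bnd i j (Some e, b)" y "{x}" g]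
  by (auto simp: apply_guard_def case_prod_beta' intro: apply_bnd_adds_constraints)

lemma canon_adds_constraints: "y \<in> canon n x \<Longrightarrow> adds_constraints (fst x) (fst y)"
  unfolding canon_def
  by (drule foldl_bind_set_adds_constraints[rotated])
    (auto simp: canon_step_def split: prod.splits intro: apply_bnd_adds_constraints)

lemma csem_antimono: "C \<subseteq> C' \<Longrightarrow> csem C' \<subseteq> csem C"
  unfolding csem_def by blast

lemma sstep_shrinks_csem:
  assumes "wf_ptba A" and "sstep A Q S"
  shows "S \<in> sstates A" and "fst (snd S) \<subseteq> fst (snd Q)"
proof -
  from assms(2) obtain l C D g R l' C2 D2 C2c D2c C1 D1 C1c D1c where
      source: "Q = (l, csem C, zone (nclk (fst A)) C D)" "finite C"
    and edge: "(l, g, R, l') \<in> trans (fst A)"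
    and guard: "(C2, D2) \<in> apply_guard g (C, D)"
    and canon_guard: "(C2c, D2c) \<in> canon (nclk (fst A)) (C2, D2)"
    and invariant: "(C1, D1) \<in> apply_guard (inv (fst A) l') (C2c, up_dbm (reset_dbm R D2c))"
    and canon_invariant: "(C1c, D1c) \<in> canon (nclk (fst A)) (C1, D1)"
    and target: "S = (l', csem C1c, zone (nclk (fst A)) C1c D1c)"
    unfolding sstep_def Let_def by blast
  have "adds_constraints C C1c"
    using apply_guard_adds_constraints[OF guard] canon_adds_constraints[OF canon_guard]
      apply_guard_adds_constraints[OF invariant] canon_adds_constraints[OF canon_invariant]
    by (metis adds_constraints_trans fst_conv)
  then obtain F where "finite F" "C1c = C \<union> F"
    unfolding adds_constraints_def by auto
  moreover have "l' \<in> locs (fst A)"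
    using assms(1) edge unfolding wf_ptba_def wf_pta_def by blast
  ultimately show "S \<in> sstates A" and "fst (snd S) \<subseteq> fst (snd Q)"
    using source target csem_antimono[of C C1c] unfolding sstates_def by auto
qed

lemma astep_shrinks_csem:
  assumes "wf_ptba A" and "abstraction A \<alpha>" and "astep A \<alpha> Q Q'"
  shows "fst (snd Q') \<subseteq> fst (snd Q)"
proof -
  from assms(3) obtain S where step: "sstep A Q S" and abstracted: "Q' \<in> \<alpha> S"
    unfolding astep_def by blast
  have "fst (snd Q') \<subseteq> fst (snd S)"
    using assms(2) sstep_shrinks_csem(1)[OF assms(1) step] abstracted
    unfolding abstraction_def by blast
  also have "\<dots> \<subseteq> fst (snd Q)"
    by (rule sstep_shrinks_csem(2)[OF assms(1) step])
  finally show ?thesis .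
qed

theorem lemma1:
  fixes A :: "('l, 'p::finite) ptba"
    and \<alpha> :: "('l, 'p) sstate \<Rightarrow> ('l, 'p) sstate set"
    and s s' :: "('l, 'p) sstate"
  assumes "wf_ptba A"
    and "abstraction A \<alpha>"
    and "s \<in> astates A \<alpha>"
    and "(astep A \<alpha>)\<^sup>*\<^sup>* s s'"
  shows "fst (snd s') \<subseteq> fst (snd s)"
  using assms(4)
proof (induction rule: rtranclp_induct)
  case base
  show ?case by simp
next
  case (step y z)
  then show ?case
    using astep_shrinks_csem[OF assms(1,2)] by blast
qed

end
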